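(* Let $d\ge3$, let $(O_1,\dots,O_n)\in SO(d)^n$ and $(r_1,\dots,r_n)\in(0,\infty)^n$, and let $\Gamma=\langle\{r_iO_i,\ r_i^{-1}O_i^{-1}: 1\le i\le n\}\rangle\le CO(d)$. Suppose that (1) $\langle\{O_i,O_i^{-1}:1\le i\le n\}\rangle=SO(d)$; (2) $\langle\{\log r_i,-\log r_i:1\le i\le n\}\rangle=\mathbb{R}$ (in the additive group $\mathbb{R}$); (3) $rI\in\Gamma$ for some $r>0$ with $r\ne1$. Then $\Gamma=CO(d)$.
   Context: $CO(d)=\{rO:r>0,O\in SO(d)\}$. For a subset $\mathcal A$ of a topological group, $\langle\mathcal A\rangle$ is the closure of $\{A_1\cdots A_n:n\ge1,A_i\in\mathcal A\}$ (with the group operation, addition in $\mathbb{R}$). *)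

theory Defs
  imports "HOL-Analysis.Analysis"
begin

definition SO :: "(real^'n^'n) set" where
  "SO = {Q. orthogonal_matrix Q \<and> det Q = 1}"

definition CO :: "(real^'n^'n) set" where
  "CO = {r *\<^sub>R Q | r Q. r > 0 \<and> Q \<in> SO}"

definition mgen :: "(real^'n^'n) set \<Rightarrow> (real^'n^'n) set \<Rightarrow> (real^'n^'n) set" where
  "mgen G A = G \<inter> closure {foldr (**) xs (mat 1) | xs. xs \<noteq> [] \<and> set xs \<subseteq> A}"

definition agen :: "real set \<Rightarrow> real set" where
  "agen A = closure {sum_list xs | xs. xs \<noteq> [] \<and> set xs \<subseteq> A}"

end

theory Submission
  imports Defs
begin

(* Let C be the closure, in the space of all matrices, of the semigroup generated by the r_i O_i
   and their inverses. Approximate a rotation Q by words in the O_i, lift the words to C, and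
   normalise their scale factors into a compact interval [1, t] with the scalars t^k I in C
   supplied by (3); a limit point gives a Q in C for some a > 0. The scales cancel in commutators,
   so C contains all commutators of SO(d), and for d >= 3 these generate SO(d), since every
   product of two reflections is a commutator of rotations. Once SO(d) lies in C, the density of
   the sums of +-log r_i produces every scalar c I, hence CO(d) lies in C. *)

lemma SO_mult: "A \<in> SO \<Longrightarrow> B \<in> SO \<Longrightarrow> A ** B \<in> SO"
  by (simp add: SO_def orthogonal_matrix_mul det_mul)

lemma SO_transpose: "A \<in> SO \<Longrightarrow> transpose A \<in> SO"
  by (simp add: SO_def)

lemma SO_one: "mat 1 \<in> SO"
  by (simp add: SO_def orthogonal_matrix_id)

lemma SO_transpose_mult: "Q \<in> SO \<Longrightarrow> transpose Q ** Q = mat 1"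
  by (simp add: SO_def orthogonal_matrix)

lemma SO_mult_transpose: "Q \<in> SO \<Longrightarrow> Q ** transpose Q = mat 1"
  by (simp add: SO_def orthogonal_matrix_def)

lemma SO_matrix_inv:
  assumes "Q \<in> SO"
  shows "matrix_inv Q = transpose Q"
proof -
  have "Q ** transpose Q = mat 1 \<and> transpose Q ** Q = mat 1"
    using assms by (simp add: SO_mult_transpose SO_transpose_mult)
  then have inv: "Q ** matrix_inv Q = mat 1 \<and> matrix_inv Q ** Q = mat 1"
    unfolding matrix_inv_def by (rule someI)
  have "matrix_inv Q = (matrix_inv Q ** Q) ** transpose Q"
    using assms by (simp add: SO_mult_transpose flip: matrix_mul_assoc)
  then show ?thesis
    using inv by simp
qed

lemma orthogonal_matrix_inner:
  fixes Q :: "real^'n^'n"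
  assumes "orthogonal_matrix Q"
  shows "(Q *v x) \<bullet> (Q *v y) = x \<bullet> y"
proof -
  have "orthogonal_transformation ((*v) Q)"
    using assms by (simp add: orthogonal_transformation_matrix matrix_vector_mul_linear matrix_of_matrix_vector_mul)
  then show ?thesis
    by (simp add: orthogonal_transformation_def)
qed

lemma matrix_eq_on_axes:
  fixes A B :: "real^'n^'n"
  assumes "\<And>j. A *v axis j 1 = B *v axis j 1"
  shows "A = B"
proof -
  have "column j A = column j B" for j
    using assms by (simp add: matrix_vector_mult_basis)
  then show ?thesis
    by (simp add: vec_eq_iff column_def)
qed

lemma scaleR_matrix_mult: "(a *\<^sub>R X) ** (b *\<^sub>R Y) = (a * b) *\<^sub>R (X ** Y :: real^'n^'n)"
  by (simp add: matrix_scalar_ac scalar_matrix_assoc[symmetric])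

lemma CO_mult: "X \<in> CO \<Longrightarrow> Y \<in> CO \<Longrightarrow> X ** Y \<in> CO"
  unfolding CO_def by (clarsimp simp: scaleR_matrix_mult) (metis SO_mult mult_pos_pos)

lemma CO_left_inverse:
  assumes "c > 0" "Q \<in> SO" "X ** (c *\<^sub>R Q) = mat 1"
  shows "X = inverse c *\<^sub>R transpose Q"
proof -
  have "X = X ** ((c *\<^sub>R Q) ** (inverse c *\<^sub>R transpose Q))"
    using assms(1,2) by (simp add: scaleR_matrix_mult SO_mult_transpose)
  also have "\<dots> = inverse c *\<^sub>R transpose Q"
    by (simp add: matrix_mul_assoc assms(3))
  finally show ?thesis .
qed

section \<open>Householder reflections\<close>

(* Since 2 / 0 = 0, the junk value is householder 0 = mat 1. *)
definition householder :: "real^'n \<Rightarrow> real^'n^'n" where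
  "householder v = mat 1 - (2 / (v \<bullet> v)) *\<^sub>R (\<chi> i j. v$i * v$j)"

lemma householder_apply: "householder v *v y = y - (2 * (v \<bullet> y) / (v \<bullet> v)) *\<^sub>R v"
proof -
  have "(\<chi> i j. v$i * v$j) *v y = (v \<bullet> y) *\<^sub>R v"
    by (simp add: vec_eq_iff matrix_vector_mult_def inner_vec_def sum_distrib_left sum_distrib_right mult_ac)
  then show ?thesis
    by (simp add: householder_def matrix_vector_mult_diff_rdistrib scaleR_matrix_vector_assoc[symmetric])
qed

lemma householder_zero [simp]: "householder 0 = mat 1"
  by (simp add: householder_def)

lemma householder_scaleR: "c \<noteq> 0 \<Longrightarrow> householder (c *\<^sub>R v) = householder v"
  unfolding matrix_eq householder_apply
  by (auto simp: inner_scaleR_left inner_scaleR_right field_simps)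

lemma householder_minus: "householder (- v) = householder v"
  using householder_scaleR[of "-1" v] by simp

lemma transpose_householder [simp]: "transpose (householder v) = householder v"
  by (simp add: householder_def transpose_def vec_eq_iff mat_def mult.commute)

lemma householder_involutive [simp]: "householder v ** householder v = mat 1"
proof (cases "v = 0")
  case False
  then show ?thesis
    unfolding matrix_eq matrix_vector_mul_assoc[symmetric] householder_apply
    by (auto simp: inner_diff_right inner_scaleR_right algebra_simps)
qed simp

lemma householder_involutive' [simp]: "householder v ** (householder v ** M) = M"
  by (simp add: matrix_mul_assoc)

lemma orthogonal_matrix_householder [simp]: "orthogonal_matrix (householder v)"
  by (simp add: orthogonal_matrix_def)

lemma householder_conj: "householder x ** householder v ** householder x = householder (householder x *v v)"
  unfolding matrix_eq matrix_vector_mul_assoc[symmetric]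
proof
  fix y
  let ?H = "householder x"
  have "v \<bullet> (?H *v y) = (?H *v v) \<bullet> y"
    by (simp add: householder_apply inner_diff_right inner_diff_left inner_commute)
  moreover have "(?H *v v) \<bullet> (?H *v v) = v \<bullet> v"
    by (simp add: orthogonal_matrix_inner)
  moreover have "?H *v (?H *v y) = y"
    by (simp add: matrix_vector_mul_assoc)
  ultimately show "?H *v (householder v *v (?H *v y)) = householder (?H *v v) *v y"
    by (simp add: householder_apply[of v] householder_apply[of "?H *v v"]
        matrix_vector_mult_diff_distrib matrix_vector_mult_scaleR)
qed

lemma householder_swap:
  assumes "norm a = norm b"
  shows "householder (a - b) *v b = a"
proof (cases "a = b")
  case False
  have "a \<bullet> a = b \<bullet> b"
    using assms by (simp add: dot_square_norm)
  then have "(a - b) \<bullet> (a - b) = 2 * (b \<bullet> b - a \<bullet> b)" "(a - b) \<bullet> b = - (b \<bullet> b - a \<bullet> b)"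
    by (simp_all add: inner_diff_left inner_diff_right inner_commute)
  moreover have "(a - b) \<bullet> (a - b) \<noteq> 0"
    using False by simp
  ultimately have "2 * ((a - b) \<bullet> b) / ((a - b) \<bullet> (a - b)) = -1"
    by (simp add: field_simps)
  then show ?thesis
    by (simp add: householder_apply)
qed simp

lemma householder_commute:
  assumes "u \<bullet> w = 0"
  shows "householder u ** householder w = householder w ** householder u"
  unfolding matrix_eq matrix_vector_mul_assoc[symmetric]
  using assms by (simp add: householder_apply inner_diff_right inner_commute algebra_simps)

lemma det_householder:
  fixes v :: "real^'n"
  assumes "v \<noteq> 0"
  shows "det (householder v) = -1"
proof -
  obtain k :: 'n where True by simp
  let ?e = "axis k 1 :: real^'n"
  have "?e \<bullet> ?e = 1"
    by (simp add: inner_axis_axis)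
  then have "householder ?e $ i $ j = (if i = j then if i = k then -1 else 1 else 0)" for i j
    unfolding householder_def by (simp add: mat_def axis_def)
  then have det_e: "det (householder ?e) = -1"
    by (simp add: det_diagonal prod.If_cases)
  define e where "e = norm v *\<^sub>R ?e"
  let ?H = "householder (v - e)"
  have "?H *v e = v"
    by (rule householder_swap) (simp add: e_def)
  then have "householder v = ?H ** householder e ** ?H"
    by (simp add: householder_conj)
  moreover have "householder e = householder ?e"
    using assms by (simp add: e_def householder_scaleR)
  moreover have "det ?H * det ?H = 1"
    by (metis det_I det_mul householder_involutive)
  ultimately show ?thesis
    by (simp add: det_mul det_e)
qed

lemma householder_fixes_axes:
  fixes Q :: "real^'n^'n"
  assumes "orthogonal_matrix Q" "j = k \<or> Q *v axis j 1 = axis j 1"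
  defines "x \<equiv> axis k 1 - Q *v axis k 1"
  shows "(householder x ** Q) *v axis j 1 = axis j 1"
proof (cases "j = k")
  case True
  have "norm (axis k 1 :: real^'n) = norm (Q *v axis k 1)"
    using orthogonal_matrix_inner[OF assms(1), of "axis k 1" "axis k 1"] by (simp add: norm_eq_sqrt_inner)
  from householder_swap[OF this] show ?thesis
    using True by (simp add: x_def flip: matrix_vector_mul_assoc)
next
  case False
  then have Qj: "Q *v axis j 1 = axis j 1"
    using assms(2) by simp
  then have "(Q *v axis k 1) \<bullet> axis j 1 = axis k 1 \<bullet> (axis j 1 :: real^'n)"
    using orthogonal_matrix_inner[OF assms(1), of "axis k 1" "axis j 1"] by simp
  then have "x \<bullet> axis j 1 = 0"
    using False by (simp add: x_def inner_diff_left inner_axis_axis)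
  then show ?thesis
    by (simp add: householder_apply Qj flip: matrix_vector_mul_assoc)
qed

lemma orthogonal_matrix_householder_product:
  fixes Q :: "real^'n^'n"
  assumes "orthogonal_matrix Q"
  obtains vs where "0 \<notin> set vs" "Q = foldr (**) (map householder vs) (mat 1)"
proof -
  have product: "\<exists>vs. 0 \<notin> set vs \<and> Q = foldr (**) (map householder vs) (mat 1)"
    if "finite F" "orthogonal_matrix Q" "\<And>j. j \<notin> F \<Longrightarrow> Q *v axis j 1 = axis j 1"
    for F :: "'n set" and Q :: "real^'n^'n"
    using that
  proof (induction F arbitrary: Q rule: finite_induct)
    case empty
    then have "Q = mat 1"
      by (intro matrix_eq_on_axes) simp
    then show ?case
      by (intro exI[of _ "[]"]) simp
  next
    case (insert k F)
    define x where "x = axis k 1 - Q *v axis k 1"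
    have "\<exists>vs. 0 \<notin> set vs \<and> householder x ** Q = foldr (**) (map householder vs) (mat 1)"
    proof (rule insert.IH)
      show "orthogonal_matrix (householder x ** Q)"
        by (simp add: orthogonal_matrix_mul insert.prems)
      show "(householder x ** Q) *v axis j 1 = axis j 1" if "j \<notin> F" for j
        unfolding x_def using that insert.prems by (intro householder_fixes_axes) auto
    qed
    then obtain vs where vs: "0 \<notin> set vs" "householder x ** Q = foldr (**) (map householder vs) (mat 1)"
      by blast
    have "Q = householder x ** (householder x ** Q)"
      by simp
    then have "Q = foldr (**) (map householder (if x = 0 then vs else x # vs)) (mat 1)"
      unfolding vs(2) by (cases "x = 0") simp_all
    moreover have "0 \<notin> set (if x = 0 then vs else x # vs)"
      using vs(1) by simp
    ultimately show ?case
      by blast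
  qed
  then show thesis
    using product[of UNIV Q] assms that by auto
qed

lemma det_householder_product:
  fixes vs :: "(real^'n) list"
  assumes "0 \<notin> set vs"
  shows "det (foldr (**) (map householder vs) (mat 1)) = (-1) ^ length vs"
  using assms by (induction vs) (auto simp: det_mul det_householder)

lemma SO_even_householder_product:
  fixes Q :: "real^'n^'n"
  assumes "Q \<in> SO"
  obtains vs where "0 \<notin> set vs" "even (length vs)" "Q = foldr (**) (map householder vs) (mat 1)"
proof -
  have "orthogonal_matrix Q"
    using assms by (simp add: SO_def)
  then obtain vs where vs: "0 \<notin> set vs" "Q = foldr (**) (map householder vs) (mat 1)"
    by (rule orthogonal_matrix_householder_product)
  then have "(-1 :: real) ^ length vs = 1"
    using assms det_householder_product[OF vs(1)] by (simp add: SO_def)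
  then show thesis
    using that vs by (simp add: minus_one_power_iff split: if_splits)
qed

section \<open>Rotations are products of commutators\<close>

lemma householder_commutator:
  assumes "a \<bullet> w = 0" "b \<bullet> w = 0"
  defines "A \<equiv> householder a ** householder w" and "B \<equiv> householder b ** householder w"
  shows "A ** B ** transpose A ** transpose B = householder a ** householder b ** householder a ** householder b"
proof -
  have "householder w *v (householder w *v y) = y" for y
    by (simp add: matrix_vector_mul_assoc)
  moreover have "householder w *v (householder c *v y) = householder c *v (householder w *v y)" if "c \<bullet> w = 0" for c y
    using householder_commute[OF that] by (metis matrix_vector_mul_assoc)
  ultimately show ?thesis
    unfolding matrix_eq A_def B_def matrix_transpose_mul transpose_householder
    by (simp add: assms(1,2) flip: matrix_vector_mul_assoc)
qed

lemma householder_pair_commutator: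
  fixes u v :: "real^'n"
  assumes "CARD('n) \<ge> 3" "u \<noteq> 0" "v \<noteq> 0"
  obtains A B where "A \<in> SO" "B \<in> SO"
    "householder u ** householder v = A ** B ** transpose A ** transpose B"
proof -
  (* With v' of the same length as u, the reflection in b = u + v' exchanges u and -v', so
     H u H v = H u H b H u H b; for w orthogonal to u and b (this needs d \<ge> 3) that is the
     commutator of H u H w and H b H w. *)
  define v' where "v' = (norm u / norm v) *\<^sub>R v"
  have H_v': "householder v' = householder v"
    using assms by (simp add: v'_def householder_scaleR)
  define b where "b = u + v'"
  show thesis
  proof (cases "b = 0")
    case True
    then have "householder v = householder u"
      by (metis H_v' add_eq_0_iff householder_minus b_def)
    then show thesis
      using that[OF SO_one SO_one] by simp
  next
    case False
    have "card {u, b} \<le> 2"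
      by (cases "u = b") simp_all
    then have "dim {u, b} < DIM(real^'n)"
      using assms(1) dim_le_card'[of "{u, b}"] by simp
    then obtain w where w: "w \<noteq> 0" "\<And>y. y \<in> span {u, b} \<Longrightarrow> orthogonal w y"
      using orthogonal_to_subspace_exists by blast
    then have "u \<bullet> w = 0" "b \<bullet> w = 0"
      by (simp_all add: span_base orthogonal_def inner_commute)
    note commutator = householder_commutator[OF this]
    have "norm (- v') = norm u" "- v' - u = - b"
      using assms(3) by (simp_all add: v'_def b_def)
    then have "householder b *v u = - v'"
      using householder_swap[of "- v'" u] by (simp add: householder_minus)
    then have "householder b ** householder u ** householder b = householder v"
      by (simp add: householder_conj householder_minus H_v')
    then have "householder u ** householder v
        = householder u ** householder b ** householder u ** householder b"
      by (metis matrix_mul_assoc)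
    moreover have "householder u ** householder w \<in> SO" "householder b ** householder w \<in> SO"
      using w(1) assms(2) False by (simp_all add: SO_def orthogonal_matrix_mul det_mul det_householder)
    ultimately show thesis
      using that commutator by metis
  qed
qed

lemma SO_subset_commutator_closed:
  fixes G :: "(real^'n^'n) set"
  assumes "CARD('n) \<ge> 3"
    and mult: "\<And>x y. x \<in> G \<Longrightarrow> y \<in> G \<Longrightarrow> x ** y \<in> G"
    and commutator: "\<And>A B. A \<in> SO \<Longrightarrow> B \<in> SO \<Longrightarrow> A ** B ** transpose A ** transpose B \<in> G"
  shows "SO \<subseteq> G"
proof
  fix Q :: "real^'n^'n"
  assume "Q \<in> SO"
  then obtain vs where vs: "0 \<notin> set vs" "even (length vs)" "Q = foldr (**) (map householder vs) (mat 1)"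
    by (rule SO_even_householder_product)
  have "foldr (**) (map householder vs) (mat 1) \<in> G"
    using vs(1,2)
  proof (induction vs rule: induct_list012)
    case 1
    then show ?case
      using commutator[OF SO_one SO_one] by simp
  next
    case (3 x y zs)
    then obtain A B where "A \<in> SO" "B \<in> SO"
      "householder x ** householder y = A ** B ** transpose A ** transpose B"
      using householder_pair_commutator[OF assms(1)] by (metis list.set_intros(1,2))
    then have "householder x ** householder y \<in> G"
      using commutator by simp
    then show ?case
      using mult 3 by (simp add: matrix_mul_assoc)
  qed simp
  then show "Q \<in> G"
    using vs(3) by simp
qed

section \<open>Closures of finitely generated semigroups\<close>

lemma tendsto_matrix_mult [tendsto_intros]:
  fixes f g :: "'a \<Rightarrow> real^'n^'n"
  assumes "(f \<longlongrightarrow> A) F" "(g \<longlongrightarrow> B) F"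
  shows "((\<lambda>x. f x ** g x) \<longlongrightarrow> A ** B) F"
  unfolding matrix_matrix_mult_def
  by (intro vec_tendstoI) (simp add: tendsto_sum tendsto_mult tendsto_vec_nth assms)

lemma tendsto_transpose [tendsto_intros]:
  fixes f :: "'a \<Rightarrow> real^'n^'n"
  assumes "(f \<longlongrightarrow> A) F"
  shows "((\<lambda>x. transpose (f x)) \<longlongrightarrow> transpose A) F"
  unfolding transpose_def
  by (intro vec_tendstoI) (simp add: tendsto_vec_nth assms)

lemma closure_matrix_mult_closed:
  fixes S :: "(real^'n^'n) set"
  assumes "\<And>x y. x \<in> S \<Longrightarrow> y \<in> S \<Longrightarrow> x ** y \<in> S" "x \<in> closure S" "y \<in> closure S"
  shows "x ** y \<in> closure S"
proof -
  obtain f where f: "\<forall>k. f k \<in> S" "f \<longlonglongrightarrow> x"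
    using assms(2) closure_sequential by blast
  obtain g where g: "\<forall>k. g k \<in> S" "g \<longlonglongrightarrow> y"
    using assms(3) closure_sequential by blast
  have "\<forall>k. f k ** g k \<in> S" "(\<lambda>k. f k ** g k) \<longlonglongrightarrow> x ** y"
    using f g assms(1) by (simp_all add: tendsto_matrix_mult)
  then show ?thesis
    unfolding closure_sequential by (intro exI[of _ "\<lambda>k. f k ** g k"]) simp
qed

definition products :: "(real^'n^'n) set \<Rightarrow> (real^'n^'n) set" where
  "products A = {foldr (**) xs (mat 1) | xs. xs \<noteq> [] \<and> set xs \<subseteq> A}"

lemma mgen_eq: "mgen G A = G \<inter> closure (products A)"
  by (simp add: mgen_def products_def)

lemma products_base: "a \<in> A \<Longrightarrow> a \<in> products A"
  unfolding products_def by (intro CollectI exI[of _ "[a]"]) simp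

lemma products_Cons:
  assumes "a \<in> A" "p \<in> products A"
  shows "a ** p \<in> products A"
proof -
  obtain xs where "p = foldr (**) xs (mat 1)" "xs \<noteq> []" "set xs \<subseteq> A"
    using assms(2) by (auto simp: products_def)
  then show ?thesis
    unfolding products_def using assms(1) by (intro CollectI exI[of _ "a # xs"]) simp
qed

lemma products_induct [consumes 1, case_names base Cons]:
  assumes "p \<in> products A"
    and "\<And>a. a \<in> A \<Longrightarrow> P a"
    and "\<And>a p. a \<in> A \<Longrightarrow> p \<in> products A \<Longrightarrow> P p \<Longrightarrow> P (a ** p)"
  shows "P p"
proof -
  obtain xs where xs: "p = foldr (**) xs (mat 1)" "xs \<noteq> []" "set xs \<subseteq> A"
    using assms(1) by (auto simp: products_def)
  have "P (foldr (**) xs (mat 1))"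
    using xs(2,3)
  proof (induction xs rule: list_nonempty_induct)
    case (cons x xs)
    then have "foldr (**) xs (mat 1) \<in> products A"
      by (auto simp: products_def)
    then show ?case
      using cons assms(3) by simp
  qed (use assms(2) in simp)
  then show ?thesis
    using xs(1) by simp
qed

lemma products_mult: "p \<in> products A \<Longrightarrow> q \<in> products A \<Longrightarrow> p ** q \<in> products A"
  by (induction p rule: products_induct) (simp_all add: products_Cons flip: matrix_mul_assoc)

lemma products_left_inverse:
  assumes "\<And>a. a \<in> A \<Longrightarrow> \<exists>a'\<in>A. a' ** a = mat 1" and "p \<in> products A"
  shows "\<exists>q\<in>products A. q ** p = mat 1"
  using assms(2)
proof (induction p rule: products_induct)
  case (base a)
  then show ?case
    using assms(1) products_base by blast
next
  case (Cons a p)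
  then obtain a' q where "a' \<in> A" "a' ** a = mat 1" "q \<in> products A" "q ** p = mat 1"
    using assms(1) by blast
  have "(q ** a') ** (a ** p) = q ** ((a' ** a) ** p)"
    by (metis matrix_mul_assoc)
  then have "(q ** a') ** (a ** p) = mat 1" "q ** a' \<in> products A"
    using \<open>a' ** a = mat 1\<close> \<open>q ** p = mat 1\<close> \<open>q \<in> products A\<close> \<open>a' \<in> A\<close>
    by (simp_all add: products_mult products_base)
  then show ?case
    by blast
qed

lemma products_subset_CO:
  assumes "A \<subseteq> CO"
  shows "products A \<subseteq> CO"
proof
  fix p
  assume "p \<in> products A"
  then show "p \<in> CO"
    by (induction p rule: products_induct) (use assms CO_mult in auto)
qed

lemma closure_products_inverse:
  fixes Q :: "real^'n^'n"
  assumes "A \<subseteq> CO" "\<And>a. a \<in> A \<Longrightarrow> \<exists>a'\<in>A. a' ** a = mat 1"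
    and "c > 0" "Q \<in> SO" "c *\<^sub>R Q \<in> closure (products A)"
  shows "inverse c *\<^sub>R transpose Q \<in> closure (products A)"
proof -
  (* On CO the inverse is transpose M scaled by 1 / (transpose M ** M)$k$k, an expression that is
     continuous at every point of CO. *)
  obtain k :: 'n where True by simp
  define inv where "inv M = inverse ((transpose M ** M) $ k $ k) *\<^sub>R transpose M" for M :: "real^'n^'n"
  have gram: "transpose (a *\<^sub>R P) ** (a *\<^sub>R P) = (a * a) *\<^sub>R mat 1" if "P \<in> SO" for a and P :: "real^'n^'n"
    using that by (simp add: transpose_scalar scaleR_matrix_mult SO_transpose_mult)
  have inv_CO: "inv (a *\<^sub>R P) = inverse a *\<^sub>R transpose P" if "a > 0" "P \<in> SO" for a P
    using that unfolding inv_def gram[OF that(2)] by (simp add: mat_def transpose_scalar field_simps)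
  have "inv p \<in> products A" if "p \<in> products A" for p
  proof -
    obtain a P where aP: "p = a *\<^sub>R P" "a > 0" "P \<in> SO"
      using products_subset_CO[OF assms(1)] \<open>p \<in> products A\<close> by (auto simp: CO_def)
    obtain q where "q \<in> products A" "q ** p = mat 1"
      using products_left_inverse[OF assms(2) \<open>p \<in> products A\<close>] by blast
    then show ?thesis
      using CO_left_inverse[OF aP(2,3)] inv_CO[OF aP(2,3)] aP(1) by simp
  qed
  moreover obtain f where "\<forall>j. f j \<in> products A" "f \<longlonglongrightarrow> c *\<^sub>R Q"
    using assms(5) closure_sequential by blast
  moreover have "(transpose (c *\<^sub>R Q) ** (c *\<^sub>R Q)) $ k $ k \<noteq> 0"
    using assms(3,4) by (simp add: gram mat_def)
  ultimately have "\<forall>j. inv (f j) \<in> products A" "(\<lambda>j. inv (f j)) \<longlonglongrightarrow> inv (c *\<^sub>R Q)"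
    unfolding inv_def by (auto intro!: tendsto_intros)
  then have "inv (c *\<^sub>R Q) \<in> closure (products A)"
    unfolding closure_sequential by (intro exI[of _ "\<lambda>j. inv (f j)"]) simp
  then show ?thesis
    using inv_CO[OF assms(3,4)] by simp
qed

lemma products_scaled_lift:
  assumes "\<And>w. w \<in> W \<Longrightarrow> \<exists>c>0. c *\<^sub>R w \<in> A" "p \<in> products W"
  shows "\<exists>c>0. c *\<^sub>R p \<in> products A"
  using assms(2)
proof (induction p rule: products_induct)
  case (base w)
  then show ?case
    using assms(1) products_base by blast
next
  case (Cons w p)
  then obtain a c where "a > 0" "a *\<^sub>R w \<in> A" "c > 0" "c *\<^sub>R p \<in> products A"
    using assms(1) by blast
  then have "(a * c) *\<^sub>R (w ** p) \<in> products A" "a * c > 0"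
    by (simp_all add: products_Cons flip: scaleR_matrix_mult)
  then show ?case
    by blast
qed

lemma sum_list_exp_lift:
  assumes "\<And>x. x \<in> L \<Longrightarrow> \<exists>Q\<in>SO. exp x *\<^sub>R Q \<in> A" "xs \<noteq> []" "set xs \<subseteq> L"
  shows "\<exists>Q\<in>SO. exp (sum_list xs) *\<^sub>R Q \<in> products A"
  using assms(2,3)
proof (induction xs rule: list_nonempty_induct)
  case (single x)
  then show ?case
    using assms(1) products_base by fastforce
next
  case (cons x xs)
  then have "x \<in> L" "set xs \<subseteq> L"
    by simp_all
  then obtain P Q where "P \<in> SO" "exp x *\<^sub>R P \<in> A" "Q \<in> SO" "exp (sum_list xs) *\<^sub>R Q \<in> products A"
    using assms(1) cons.IH by blast
  then have "exp (sum_list (x # xs)) *\<^sub>R (P ** Q) \<in> products A" "P ** Q \<in> SO"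
    by (simp_all add: products_Cons SO_mult exp_add flip: scaleR_matrix_mult)
  then show ?case
    by blast
qed

lemma rotation_parts_dense:
  assumes "\<And>w. w \<in> W \<Longrightarrow> \<exists>c>0. c *\<^sub>R w \<in> A" "SO \<subseteq> closure (products W)"
  shows "SO \<subseteq> closure {X. \<exists>c>0. c *\<^sub>R X \<in> closure (products A)}"
proof -
  have "products W \<subseteq> {X. \<exists>c>0. c *\<^sub>R X \<in> closure (products A)}"
    using products_scaled_lift[OF assms(1)] closure_subset by blast
  then show ?thesis
    using assms(2) closure_mono by blast
qed

lemma scale_parts_dense:
  assumes "\<And>x. x \<in> L \<Longrightarrow> \<exists>Q\<in>SO. exp x *\<^sub>R Q \<in> A" "agen L = UNIV" "c > 0"
  shows "c \<in> closure {a. \<exists>Q\<in>SO. a *\<^sub>R Q \<in> closure (products A)}"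
proof -
  let ?sums = "{sum_list xs | xs. xs \<noteq> [] \<and> set xs \<subseteq> L}"
  have sums: "exp ` ?sums \<subseteq> {a. \<exists>Q\<in>SO. a *\<^sub>R Q \<in> closure (products A)}"
    using sum_list_exp_lift[OF assms(1)] closure_subset by blast
  have "exp ` closure ?sums \<subseteq> closure {a. \<exists>Q\<in>SO. a *\<^sub>R Q \<in> closure (products A)}"
  proof (rule image_closure_subset)
    show "continuous_on (closure ?sums) exp"
      by (intro continuous_intros)
    show "exp ` ?sums \<subseteq> closure {a. \<exists>Q\<in>SO. a *\<^sub>R Q \<in> closure (products A)}"
      using sums closure_subset by (rule subset_trans)
  qed simp
  moreover have "ln c \<in> closure ?sums"
    using assms(2) unfolding agen_def by simp
  ultimately have "exp (ln c) \<in> closure {a. \<exists>Q\<in>SO. a *\<^sub>R Q \<in> closure (products A)}"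
    by blast
  then show ?thesis
    using assms(3) by simp
qed

section \<open>Closed subsemigroups with dense rotation and scale parts\<close>

lemma powr_int_scaling:
  assumes "1 < t" "0 < c"
  obtains k :: int where "1 \<le> t powr k * c" "t powr k * c \<le> t"
proof
  define l where "l = log t c"
  have "t powr (- \<lfloor>l\<rfloor>) * c = t powr (l - \<lfloor>l\<rfloor>)"
    using assms by (simp add: l_def powr_diff powr_minus divide_inverse mult.commute)
  moreover have "0 \<le> l - \<lfloor>l\<rfloor>" "l - \<lfloor>l\<rfloor> \<le> 1"
    by linarith+
  ultimately show "1 \<le> t powr real_of_int (- \<lfloor>l\<rfloor>) * c" "t powr real_of_int (- \<lfloor>l\<rfloor>) * c \<le> t"
    using assms(1) powr_mono[of "l - \<lfloor>l\<rfloor>" 1 t] by (auto simp: ge_one_powr_ge_zero)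
qed

lemma closed_scaleR_limit:
  fixes C :: "'a::real_normed_vector set"
  assumes "closed C" "compact K" "\<And>j. a j \<in> K" "\<And>j. a j *\<^sub>R w j \<in> C" "w \<longlonglongrightarrow> x"
  obtains b where "b \<in> K" "b *\<^sub>R x \<in> C"
proof -
  have "\<forall>j. a j \<in> K"
    using assms(3) by blast
  with compact_imp_seq_compact[OF assms(2)]
  obtain b \<phi> where b: "b \<in> K" "strict_mono \<phi>" "(a \<circ> \<phi>) \<longlonglongrightarrow> b"
    by (rule seq_compactE)
  have "(w \<circ> \<phi>) \<longlonglongrightarrow> x"
    using LIMSEQ_subseq_LIMSEQ[OF assms(5) b(2)] .
  then have "(\<lambda>j. (a \<circ> \<phi>) j *\<^sub>R (w \<circ> \<phi>) j) \<longlonglongrightarrow> b *\<^sub>R x"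
    using b(3) by (rule tendsto_scaleR[rotated])
  then have "b *\<^sub>R x \<in> C"
    by (rule closed_sequentially[OF assms(1), rotated]) (simp add: assms(4))
  then show thesis
    using that b(1) by blast
qed

(* C stands for the closure of the semigroup in the space of all matrices; it may contain singular
   limits such as 0, so only its elements in CO are required to have inverses in C. *)
locale closed_CO_semigroup =
  fixes C :: "(real^'n^'n) set"
  assumes closed: "closed C"
    and mult_closed: "\<And>X Y. X \<in> C \<Longrightarrow> Y \<in> C \<Longrightarrow> X ** Y \<in> C"
    and inverse_closed: "\<And>c Q. c > 0 \<Longrightarrow> Q \<in> SO \<Longrightarrow> c *\<^sub>R Q \<in> C \<Longrightarrow> inverse c *\<^sub>R transpose Q \<in> C"
    and nontrivial_scalar: "\<exists>s>0. s \<noteq> 1 \<and> s *\<^sub>R mat 1 \<in> C"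
begin

lemma scalar_inverse: "s > 0 \<Longrightarrow> s *\<^sub>R mat 1 \<in> C \<Longrightarrow> inverse s *\<^sub>R mat 1 \<in> C"
  using inverse_closed[OF _ SO_one] by (simp add: transpose_mat)

lemma one_mem: "mat 1 \<in> C"
proof -
  obtain s where "s > 0" "s *\<^sub>R mat 1 \<in> C"
    using nontrivial_scalar by blast
  then have "(s *\<^sub>R mat 1) ** (inverse s *\<^sub>R mat 1) \<in> C"
    by (simp add: mult_closed scalar_inverse)
  then show ?thesis
    using \<open>s > 0\<close> by (simp add: scaleR_matrix_mult)
qed

lemma scalar_power_mem: "a *\<^sub>R mat 1 \<in> C \<Longrightarrow> (a ^ m) *\<^sub>R mat 1 \<in> C"
proof (induction m)
  case (Suc m)
  then have "(a *\<^sub>R mat 1) ** ((a ^ m) *\<^sub>R mat 1) \<in> C"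
    by (simp add: mult_closed)
  then show ?case
    by (simp add: scaleR_matrix_mult)
qed (simp add: one_mem)

lemma scalar_powr_int_mem:
  obtains t where "t > 1" "\<And>k :: int. (t powr k) *\<^sub>R mat 1 \<in> C"
proof -
  obtain s where s: "s > 0" "s \<noteq> 1" "s *\<^sub>R mat 1 \<in> C"
    using nontrivial_scalar by blast
  define t where "t = max s (inverse s)"
  have "t > 1"
    using s(1,2) one_less_inverse[of s] by (cases "s < 1") (auto simp: t_def)
  have t_mem: "t *\<^sub>R mat 1 \<in> C" "inverse t *\<^sub>R mat 1 \<in> C"
    using s scalar_inverse by (auto simp: t_def max_def)
  have "t powr k = (if k \<ge> 0 then t ^ nat k else inverse t ^ nat (- k))" for k :: int
    using \<open>t > 1\<close> by (simp add: powr_int power_inverse divide_inverse)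
  then have "(t powr k) *\<^sub>R mat 1 \<in> C" for k :: int
    using t_mem by (simp add: scalar_power_mem)
  then show thesis
    using that \<open>t > 1\<close> by blast
qed

lemma rescaled_mem:
  assumes "X \<in> closure {W. \<exists>c>0. c *\<^sub>R W \<in> C}"
  obtains a where "a > 0" "a *\<^sub>R X \<in> C"
proof -
  (* Scalar powers of t move the scale of each approximant into the compact interval [1, t]. *)
  obtain t where t: "t > 1" "\<And>k :: int. (t powr k) *\<^sub>R mat 1 \<in> C"
    using scalar_powr_int_mem by blast
  obtain W where W: "\<forall>j. W j \<in> {W. \<exists>c>0. c *\<^sub>R W \<in> C}" "W \<longlonglongrightarrow> X"
    using assms closure_sequential by blast
  have "\<exists>a. a \<in> {1..t} \<and> a *\<^sub>R W j \<in> C" for j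
  proof -
    obtain c where c: "c > 0" "c *\<^sub>R W j \<in> C"
      using W(1) by auto
    obtain k :: int where k: "1 \<le> t powr k * c" "t powr k * c \<le> t"
      using powr_int_scaling[OF t(1) c(1)] .
    have "((t powr k) *\<^sub>R mat 1) ** (c *\<^sub>R W j) \<in> C"
      using mult_closed t(2) c(2) by blast
    then have "(t powr k * c) *\<^sub>R W j \<in> C"
      by (simp add: scaleR_matrix_mult)
    then show ?thesis
      using k by auto
  qed
  then obtain a where "\<And>j. a j \<in> {1..t}" "\<And>j. a j *\<^sub>R W j \<in> C"
    by metis
  then obtain b where "b \<in> {1..t}" "b *\<^sub>R X \<in> C"
    using closed_scaleR_limit[OF closed compact_Icc _ _ W(2)] by blast
  then show thesis
    by (intro that[of b]) auto
qed

lemma commutator_mem: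
  assumes "\<And>Q. Q \<in> SO \<Longrightarrow> \<exists>a>0. a *\<^sub>R Q \<in> C" "A \<in> SO" "B \<in> SO"
  shows "A ** B ** transpose A ** transpose B \<in> C"
proof -
  obtain a b where "a > 0" "a *\<^sub>R A \<in> C" "b > 0" "b *\<^sub>R B \<in> C"
    using assms by blast
  then have "(a *\<^sub>R A) ** (b *\<^sub>R B) ** (inverse a *\<^sub>R transpose A) ** (inverse b *\<^sub>R transpose B) \<in> C"
    using assms(2,3) by (simp add: mult_closed inverse_closed)
  moreover have "a * b * inverse a * inverse b = 1"
    using \<open>a > 0\<close> \<open>b > 0\<close> by (simp add: field_simps)
  ultimately show ?thesis
    by (simp add: scaleR_matrix_mult)
qed

lemma SO_subset:
  assumes "CARD('n) \<ge> 3" "SO \<subseteq> closure {W. \<exists>c>0. c *\<^sub>R W \<in> C}"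
  shows "SO \<subseteq> C"
proof (rule SO_subset_commutator_closed[OF assms(1) mult_closed])
  have "\<exists>a>0. a *\<^sub>R Q \<in> C" if "Q \<in> SO" for Q
    using rescaled_mem assms(2) that by blast
  then show "A ** B ** transpose A ** transpose B \<in> C" if "A \<in> SO" "B \<in> SO" for A B
    using commutator_mem that by blast
qed

lemma scalar_mem:
  assumes "SO \<subseteq> C" "c \<in> closure {a. \<exists>Q\<in>SO. a *\<^sub>R Q \<in> C}"
  shows "c *\<^sub>R mat 1 \<in> C"
proof -
  obtain a where a: "\<forall>j. a j \<in> {a. \<exists>Q\<in>SO. a *\<^sub>R Q \<in> C}" "a \<longlonglongrightarrow> c"
    using assms(2) closure_sequential by blast
  have "a j *\<^sub>R mat 1 \<in> C" for j
  proof -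
    obtain Q where "Q \<in> SO" "a j *\<^sub>R Q \<in> C"
      using a(1) by auto
    then have "(a j *\<^sub>R Q) ** transpose Q \<in> C"
      using assms(1) SO_transpose mult_closed by blast
    then show ?thesis
      using \<open>Q \<in> SO\<close> by (simp add: SO_mult_transpose flip: scalar_matrix_assoc)
  qed
  moreover have "(\<lambda>j. a j *\<^sub>R mat 1) \<longlonglongrightarrow> c *\<^sub>R (mat 1 :: real^'n^'n)"
    using a(2) by (intro tendsto_intros)
  ultimately show ?thesis
    by (rule closed_sequentially[OF closed])
qed

lemma CO_subset:
  assumes "CARD('n) \<ge> 3"
    and "SO \<subseteq> closure {W. \<exists>c>0. c *\<^sub>R W \<in> C}"
    and "\<And>c. c > 0 \<Longrightarrow> c \<in> closure {a. \<exists>Q\<in>SO. a *\<^sub>R Q \<in> C}"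
  shows "CO \<subseteq> C"
proof
  fix X :: "real^'n^'n"
  assume "X \<in> CO"
  then obtain c Q where "X = (c *\<^sub>R mat 1) ** Q" "c > 0" "Q \<in> SO"
    by (auto simp: CO_def simp flip: scalar_matrix_assoc)
  moreover have "SO \<subseteq> C"
    using SO_subset assms(1,2) by blast
  ultimately show "X \<in> C"
    using scalar_mem assms(3) mult_closed by blast
qed

end

definition scaled_rotations :: "('i \<Rightarrow> real) \<Rightarrow> ('i \<Rightarrow> real^'n^'n) \<Rightarrow> 'i set \<Rightarrow> (real^'n^'n) set" where
  "scaled_rotations r U I = (\<lambda>i. r i *\<^sub>R U i) ` I \<union> (\<lambda>i. inverse (r i) *\<^sub>R matrix_inv (U i)) ` I"

context
  fixes r :: "'i \<Rightarrow> real" and U :: "'i \<Rightarrow> real^'n^'n" and I :: "'i set"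
  assumes scaled_rotation: "\<And>i. i \<in> I \<Longrightarrow> U i \<in> SO \<and> r i > 0"
begin

lemma scaled_rotations_subset_CO: "scaled_rotations r U I \<subseteq> CO"
  using scaled_rotation by (fastforce simp: scaled_rotations_def CO_def SO_matrix_inv SO_transpose)

lemma scaled_rotations_left_inverse:
  assumes "X \<in> scaled_rotations r U I"
  shows "\<exists>Y\<in>scaled_rotations r U I. Y ** X = mat 1"
proof -
  obtain i where i: "i \<in> I" "X = r i *\<^sub>R U i \<or> X = inverse (r i) *\<^sub>R matrix_inv (U i)"
    using assms by (auto simp: scaled_rotations_def)
  then have "r i *\<^sub>R U i \<in> scaled_rotations r U I" "inverse (r i) *\<^sub>R matrix_inv (U i) \<in> scaled_rotations r U I"
    by (auto simp: scaled_rotations_def)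
  moreover have "(inverse (r i) *\<^sub>R matrix_inv (U i)) ** (r i *\<^sub>R U i) = mat 1"
    "(r i *\<^sub>R U i) ** (inverse (r i) *\<^sub>R matrix_inv (U i)) = mat 1"
    using scaled_rotation[OF i(1)]
    by (simp_all add: scaleR_matrix_mult SO_matrix_inv SO_mult_transpose SO_transpose_mult)
  ultimately show ?thesis
    using i(2) by blast
qed

lemma scaled_rotations_lift_rotation:
  assumes "W \<in> U ` I \<union> (\<lambda>i. matrix_inv (U i)) ` I"
  shows "\<exists>c>0. c *\<^sub>R W \<in> scaled_rotations r U I"
proof -
  obtain i where i: "i \<in> I" "W = U i \<or> W = matrix_inv (U i)"
    using assms by blast
  then have "r i *\<^sub>R U i \<in> scaled_rotations r U I" "inverse (r i) *\<^sub>R matrix_inv (U i) \<in> scaled_rotations r U I"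
    by (auto simp: scaled_rotations_def)
  then show ?thesis
    using i scaled_rotation[OF i(1)] by (metis inverse_positive_iff_positive)
qed

lemma scaled_rotations_lift_log:
  assumes "x \<in> (\<lambda>i. ln (r i)) ` I \<union> (\<lambda>i. - ln (r i)) ` I"
  shows "\<exists>Q\<in>SO. exp x *\<^sub>R Q \<in> scaled_rotations r U I"
proof -
  obtain i where i: "i \<in> I" "x = ln (r i) \<or> x = - ln (r i)"
    using assms by blast
  then have "r i *\<^sub>R U i \<in> scaled_rotations r U I" "inverse (r i) *\<^sub>R matrix_inv (U i) \<in> scaled_rotations r U I"
    by (auto simp: scaled_rotations_def)
  moreover have "U i \<in> SO" "matrix_inv (U i) \<in> SO" "r i > 0"
    using scaled_rotation[OF i(1)] by (simp_all add: SO_matrix_inv SO_transpose)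
  ultimately show ?thesis
    using i(2) by (auto simp: exp_minus)
qed

end

theorem proposition3p3:
  fixes U :: "nat \<Rightarrow> real^'d^'d" and r :: "nat \<Rightarrow> real" and n :: nat
  assumes "CARD('d) \<ge> 3"
    and "\<forall>i\<in>{1..n}. U i \<in> SO \<and> r i > 0"
    and "mgen SO ((\<lambda>i. U i) ` {1..n} \<union> (\<lambda>i. matrix_inv (U i)) ` {1..n}) = SO"
    and "agen ((\<lambda>i. ln (r i)) ` {1..n} \<union> (\<lambda>i. - ln (r i)) ` {1..n}) = UNIV"
    and "\<exists>s>0. s \<noteq> 1 \<and> s *\<^sub>R mat 1 \<in>
           mgen CO ((\<lambda>i. r i *\<^sub>R U i) ` {1..n} \<union>
                    (\<lambda>i. inverse (r i) *\<^sub>R matrix_inv (U i)) ` {1..n})"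
  shows "mgen CO ((\<lambda>i. r i *\<^sub>R U i) ` {1..n} \<union>
                  (\<lambda>i. inverse (r i) *\<^sub>R matrix_inv (U i)) ` {1..n}) = CO"
proof -
  let ?A = "scaled_rotations r U {1..n}"
  let ?C = "closure (products ?A)"
  have gens: "\<And>i. i \<in> {1..n} \<Longrightarrow> U i \<in> SO \<and> r i > 0"
    using assms(2) by blast
  interpret closed_CO_semigroup ?C
  proof
    show "X ** Y \<in> ?C" if "X \<in> ?C" "Y \<in> ?C" for X Y
      using closure_matrix_mult_closed[OF products_mult that] .
    show "inverse c *\<^sub>R transpose Q \<in> ?C" if "c > 0" "Q \<in> SO" "c *\<^sub>R Q \<in> ?C" for c Q
      using closure_products_inverse[OF scaled_rotations_subset_CO[OF gens]
          scaled_rotations_left_inverse[OF gens] that] .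
    show "\<exists>s>0. s \<noteq> 1 \<and> s *\<^sub>R mat 1 \<in> ?C"
      using assms(5) by (auto simp: mgen_eq scaled_rotations_def)
  qed simp
  have "SO \<subseteq> closure (products (U ` {1..n} \<union> (\<lambda>i. matrix_inv (U i)) ` {1..n}))"
    using assms(3) unfolding mgen_eq by blast
  then have "SO \<subseteq> closure {X. \<exists>c>0. c *\<^sub>R X \<in> ?C}"
    by (rule rotation_parts_dense[rotated]) (rule scaled_rotations_lift_rotation[OF gens])
  moreover have "c \<in> closure {a. \<exists>Q\<in>SO. a *\<^sub>R Q \<in> ?C}" if "c > 0" for c
    using scale_parts_dense[OF scaled_rotations_lift_log[OF gens] assms(4) that] .
  ultimately have "CO \<subseteq> ?C"
    using CO_subset assms(1) by blast
  then show ?thesis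
    by (auto simp: mgen_eq scaled_rotations_def)
qed

end
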